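(* Let $n\ge 1$ and let $G$ be a subgraph of the complete bipartite graph $K_{n,n}$. Then $G$ can be embedded in any projective plane of order at least $n$.
   Context: A finite projective plane of order $q$ has $q^2+q+1$ points and lines, $q+1$ points on each line and $q+1$ lines through each point; any two distinct points lie on a unique line and any two lines meet in a unique point. An embedding of a simple graph $G=(V,E)$ into a projective plane is an injective map $\phi$ from $V$ to the points such that the induced map sending an edge $ab$ to the line through $\phi(a),\phi(b)$ is injective on $E$. *)

theory Defs
  imports Main
begin

definition projective_plane :: "'p set \<Rightarrow> 'l set \<Rightarrow> ('p \<Rightarrow> 'l \<Rightarrow> bool) \<Rightarrow> nat \<Rightarrow> bool" where
  "projective_plane P L I q \<longleftrightarrow>
     finite P \<and> finite L \<and>
     card P = q^2 + q + 1 \<and> card L = q^2 + q + 1 \<and>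
     (\<forall>l\<in>L. card {p\<in>P. I p l} = q + 1) \<and>
     (\<forall>p\<in>P. card {l\<in>L. I p l} = q + 1) \<and>
     (\<forall>p\<in>P. \<forall>p'\<in>P. p \<noteq> p' \<longrightarrow> (\<exists>!l. l \<in> L \<and> I p l \<and> I p' l)) \<and>
     (\<forall>l\<in>L. \<forall>l'\<in>L. l \<noteq> l' \<longrightarrow> (\<exists>!p. p \<in> P \<and> I p l \<and> I p l'))"

definition edge_line :: "'l set \<Rightarrow> ('p \<Rightarrow> 'l \<Rightarrow> bool) \<Rightarrow> ('v \<Rightarrow> 'p) \<Rightarrow> 'v set \<Rightarrow> 'l" where
  "edge_line L I \<phi> e = (THE l. l \<in> L \<and> (\<forall>x\<in>e. I (\<phi> x) l))"

definition graph_embedding :: "'v set \<Rightarrow> 'v set set \<Rightarrow> 'p set \<Rightarrow> 'l set \<Rightarrow> ('p \<Rightarrow> 'l \<Rightarrow> bool) \<Rightarrow> ('v \<Rightarrow> 'p) \<Rightarrow> bool" where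
  "graph_embedding V E P L I \<phi> \<longleftrightarrow>
     \<phi> ` V \<subseteq> P \<and> inj_on \<phi> V \<and> inj_on (edge_line L I \<phi>) E"

end

theory Submission
  imports Defs
begin

text \<open>Choose two lines \<open>l\<^sub>1 \<noteq> l\<^sub>2\<close> meeting in a point \<open>X\<close>. Each of them carries
  \<open>q \<ge> n\<close> points besides \<open>X\<close>, so the two sides of the bipartition can be placed injectively
  on \<open>l\<^sub>1 - {X}\<close> and \<open>l\<^sub>2 - {X}\<close>. The line through the images of an edge \<open>{a, b}\<close> is neither
  \<open>l\<^sub>1\<close> nor \<open>l\<^sub>2\<close>, hence it meets \<open>l\<^sub>1\<close> only in the image of \<open>a\<close> and \<open>l\<^sub>2\<close> only in the image
  of \<open>b\<close>; so the line determines the edge.\<close>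

lemma projective_plane_line_through:
  assumes "projective_plane P L I q" "p \<in> P" "p' \<in> P" "p \<noteq> p'"
  shows "\<exists>!l. l \<in> L \<and> I p l \<and> I p' l"
  using assms unfolding projective_plane_def by blast

lemma projective_plane_line_unique:
  assumes "projective_plane P L I q" "p \<in> P" "p' \<in> P" "p \<noteq> p'"
    and "l \<in> L" "I p l" "I p' l" "l' \<in> L" "I p l'" "I p' l'"
  shows "l = l'"
  using projective_plane_line_through[OF assms(1-4)] assms(5-) by blast

lemma projective_plane_meet:
  assumes "projective_plane P L I q" "l \<in> L" "l' \<in> L" "l \<noteq> l'"
  obtains X where "X \<in> P" "I X l" "I X l'" "\<And>p. p \<in> P \<Longrightarrow> I p l \<Longrightarrow> I p l' \<Longrightarrow> p = X"
proof -
  have "\<exists>!X. X \<in> P \<and> I X l \<and> I X l'"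
    using assms unfolding projective_plane_def by blast
  then show thesis
    using that unfolding Ex1_def by blast
qed

lemma projective_plane_two_lines:
  assumes "projective_plane P L I q" "q \<ge> 1"
  obtains l l' where "l \<in> L" "l' \<in> L" "l \<noteq> l'"
proof -
  have "card L = q^2 + q + 1"
    using assms(1) unfolding projective_plane_def by blast
  then have "card L \<ge> 2" using assms(2) by simp
  then obtain S where "S \<subseteq> L" "card S = 2"
    by (rule obtain_subset_with_card_n)
  then show thesis using that by (auto simp: card_2_iff)
qed

lemma card_points_on_line_off_line:
  assumes pp: "projective_plane P L I q" and "l \<in> L" "l' \<in> L" "l \<noteq> l'"
  shows "card {p \<in> P. I p l \<and> \<not> I p l'} = q"
proof -
  obtain X where X: "X \<in> P" "I X l" "I X l'"
    and unique: "\<And>p. p \<in> P \<Longrightarrow> I p l \<Longrightarrow> I p l' \<Longrightarrow> p = X"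
    using projective_plane_meet[OF assms] by blast
  have "{p \<in> P. I p l \<and> \<not> I p l'} = {p \<in> P. I p l} - {X}"
    using X unique by blast
  moreover have "finite P" "card {p \<in> P. I p l} = q + 1"
    using pp \<open>l \<in> L\<close> unfolding projective_plane_def by auto
  ultimately show ?thesis
    using X by (simp add: card_Diff_singleton)
qed

lemma edge_line_incident:
  assumes "projective_plane P L I q" "\<phi> a \<in> P" "\<phi> b \<in> P" "\<phi> a \<noteq> \<phi> b"
  shows "edge_line L I \<phi> {a, b} \<in> L"
    and "I (\<phi> a) (edge_line L I \<phi> {a, b})" "I (\<phi> b) (edge_line L I \<phi> {a, b})"
proof -
  have "edge_line L I \<phi> {a, b} = (THE l. l \<in> L \<and> I (\<phi> a) l \<and> I (\<phi> b) l)"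
    unfolding edge_line_def by simp
  with theI'[OF projective_plane_line_through[OF assms]]
  show "edge_line L I \<phi> {a, b} \<in> L"
    and "I (\<phi> a) (edge_line L I \<phi> {a, b})" "I (\<phi> b) (edge_line L I \<phi> {a, b})"
    by simp_all
qed

lemma obtain_inj_on_disjoint_parts:
  assumes "finite A" "finite B" "finite S" "finite T"
    and "card A \<le> card S" "card B \<le> card T" "A \<inter> B = {}"
  obtains \<phi> where "inj_on \<phi> A" "\<phi> ` A \<subseteq> S" "inj_on \<phi> B" "\<phi> ` B \<subseteq> T"
proof -
  obtain f g where f: "f ` A \<subseteq> S" "inj_on f A" and g: "g ` B \<subseteq> T" "inj_on g B"
    using card_le_inj assms(1-6) by meson
  define \<phi> where "\<phi> x = (if x \<in> A then f x else g x)" for x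
  have "\<phi> x = f x" if "x \<in> A" for x
    using that by (simp add: \<phi>_def)
  then have "inj_on \<phi> A" "\<phi> ` A \<subseteq> S"
    using f inj_on_cong[of A \<phi> f] by auto
  moreover have "\<phi> x = g x" if "x \<in> B" for x
    using that \<open>A \<inter> B = {}\<close> by (auto simp add: \<phi>_def)
  then have "inj_on \<phi> B" "\<phi> ` B \<subseteq> T"
    using g inj_on_cong[of B \<phi> g] by auto
  ultimately show thesis
    using that by blast
qed

lemma graph_embedding_two_lines:
  assumes pp: "projective_plane P L I q" and "l\<^sub>1 \<in> L" "l\<^sub>2 \<in> L"
    and "V \<subseteq> A \<union> B" and E: "E \<subseteq> {{a, b} | a b. a \<in> A \<and> b \<in> B}"
    and "inj_on \<phi> A" "inj_on \<phi> B"
    and on_l1: "\<And>a. a \<in> A \<Longrightarrow> \<phi> a \<in> P \<and> I (\<phi> a) l\<^sub>1 \<and> \<not> I (\<phi> a) l\<^sub>2"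
    and on_l2: "\<And>b. b \<in> B \<Longrightarrow> \<phi> b \<in> P \<and> I (\<phi> b) l\<^sub>2 \<and> \<not> I (\<phi> b) l\<^sub>1"
  shows "graph_embedding V E P L I \<phi>"
proof -
  have images_disjoint: "\<phi> a \<noteq> \<phi> b" if "a \<in> A" "b \<in> B" for a b
    using on_l1[OF that(1)] on_l2[OF that(2)] by metis
  have "inj_on \<phi> (A \<union> B)"
    using \<open>inj_on \<phi> A\<close> \<open>inj_on \<phi> B\<close> images_disjoint by (auto simp: inj_on_Un)
  have incident: "edge_line L I \<phi> {a, b} \<in> L"
      "I (\<phi> a) (edge_line L I \<phi> {a, b})" "I (\<phi> b) (edge_line L I \<phi> {a, b})"
    if "a \<in> A" "b \<in> B" for a b
    using edge_line_incident[OF pp, of \<phi> a b] images_disjoint[OF that] on_l1[OF that(1)] on_l2[OF that(2)]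
    by simp_all
  have same_line_same_edge: "a = a' \<and> b = b'"
    if "a \<in> A" "b \<in> B" "a' \<in> A" "b' \<in> B" "m \<in> L"
      and "I (\<phi> a) m" "I (\<phi> b) m" "I (\<phi> a') m" "I (\<phi> b') m" for a b a' b' m
  proof
    show "a = a'"
    proof (rule ccontr)
      assume "a \<noteq> a'"
      then have "\<phi> a \<noteq> \<phi> a'" using \<open>inj_on \<phi> A\<close> that by (meson inj_on_contraD)
      then have "m = l\<^sub>1"
        using projective_plane_line_unique[OF pp] on_l1 that \<open>l\<^sub>1 \<in> L\<close> by blast
      then show False using on_l2 that by blast
    qed
    show "b = b'"
    proof (rule ccontr)
      assume "b \<noteq> b'"
      then have "\<phi> b \<noteq> \<phi> b'" using \<open>inj_on \<phi> B\<close> that by (meson inj_on_contraD)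
      then have "m = l\<^sub>2"
        using projective_plane_line_unique[OF pp] on_l2 that \<open>l\<^sub>2 \<in> L\<close> by blast
      then show False using on_l1 that by blast
    qed
  qed
  have "inj_on (edge_line L I \<phi>) E"
  proof (rule inj_onI)
    fix e e' assume "e \<in> E" "e' \<in> E" and same: "edge_line L I \<phi> e = edge_line L I \<phi> e'"
    obtain a b where e: "e = {a, b}" "a \<in> A" "b \<in> B"
      using \<open>e \<in> E\<close> E by blast
    obtain a' b' where e': "e' = {a', b'}" "a' \<in> A" "b' \<in> B"
      using \<open>e' \<in> E\<close> E by blast
    have "edge_line L I \<phi> e \<in> L" "I (\<phi> a) (edge_line L I \<phi> e)" "I (\<phi> b) (edge_line L I \<phi> e)"
      using incident[OF e(2,3)] e(1) by simp_all
    moreover have "I (\<phi> a') (edge_line L I \<phi> e)" "I (\<phi> b') (edge_line L I \<phi> e)"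
      using incident[OF e'(2,3)] e'(1) same by simp_all
    ultimately have "a = a' \<and> b = b'"
      using same_line_same_edge[OF e(2,3) e'(2,3)] by blast
    then show "e = e'" using e e' by simp
  qed
  moreover have "\<phi> ` V \<subseteq> P"
    using \<open>V \<subseteq> A \<union> B\<close> on_l1 on_l2 by blast
  moreover have "inj_on \<phi> V"
    using \<open>inj_on \<phi> (A \<union> B)\<close> \<open>V \<subseteq> A \<union> B\<close> by (rule inj_on_subset)
  ultimately show ?thesis
    unfolding graph_embedding_def by blast
qed

theorem theorem3p1:
  fixes A B V :: "'v set" and E :: "'v set set"
    and P :: "'p set" and L :: "'l set" and I :: "'p \<Rightarrow> 'l \<Rightarrow> bool"
    and n q :: nat
  assumes "n \<ge> 1"
    and "card A = n" and "card B = n" and "A \<inter> B = {}"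
    and "V \<subseteq> A \<union> B"
    and "E \<subseteq> {{a, b} | a b. a \<in> A \<and> b \<in> B}"
    and "\<forall>e\<in>E. e \<subseteq> V"
    and pp: "projective_plane P L I q"
    and "q \<ge> n"
  shows "\<exists>\<phi>. graph_embedding V E P L I \<phi>"
proof -
  have "q \<ge> 1" using \<open>n \<ge> 1\<close> \<open>q \<ge> n\<close> by linarith
  then obtain l\<^sub>1 l\<^sub>2 where l: "l\<^sub>1 \<in> L" "l\<^sub>2 \<in> L" "l\<^sub>1 \<noteq> l\<^sub>2"
    using projective_plane_two_lines[OF pp] by blast
  define S\<^sub>1 where "S\<^sub>1 = {p \<in> P. I p l\<^sub>1 \<and> \<not> I p l\<^sub>2}"
  define S\<^sub>2 where "S\<^sub>2 = {p \<in> P. I p l\<^sub>2 \<and> \<not> I p l\<^sub>1}"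
  have "card S\<^sub>1 = q" "card S\<^sub>2 = q"
    unfolding S\<^sub>1_def S\<^sub>2_def using card_points_on_line_off_line[OF pp] l by auto
  moreover have "finite A" "finite B" "finite S\<^sub>1" "finite S\<^sub>2"
    using assms(1-3,9) \<open>card S\<^sub>1 = q\<close> \<open>card S\<^sub>2 = q\<close> by (auto intro: card_ge_0_finite)
  ultimately obtain \<phi> where "inj_on \<phi> A" "\<phi> ` A \<subseteq> S\<^sub>1" "inj_on \<phi> B" "\<phi> ` B \<subseteq> S\<^sub>2"
    using obtain_inj_on_disjoint_parts[of A B S\<^sub>1 S\<^sub>2] assms(2,3,4,9) by auto
  have "graph_embedding V E P L I \<phi>"
  proof (rule graph_embedding_two_lines[OF pp l(1,2) assms(5,6) \<open>inj_on \<phi> A\<close> \<open>inj_on \<phi> B\<close>])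
    show "\<phi> a \<in> P \<and> I (\<phi> a) l\<^sub>1 \<and> \<not> I (\<phi> a) l\<^sub>2" if "a \<in> A" for a
      using \<open>\<phi> ` A \<subseteq> S\<^sub>1\<close> that unfolding S\<^sub>1_def by blast
    show "\<phi> b \<in> P \<and> I (\<phi> b) l\<^sub>2 \<and> \<not> I (\<phi> b) l\<^sub>1" if "b \<in> B" for b
      using \<open>\<phi> ` B \<subseteq> S\<^sub>2\<close> that unfolding S\<^sub>2_def by blast
  qed
  then show ?thesis by blast
qed

end
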